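(* Let $n$ be a positive integer and let $x,y,z$ be complex numbers with $x+y+z=1$. (i) If $r,s,t$ are complex numbers with $r+s+t=n-1$, then $$\sum_{k=0}^n(-1)^k\binom rk\binom s{n-k}B_k(x)E_{n-k}(z)-(-1)^n\sum_{k=0}^n(-1)^k\binom rk\binom t{n-k}B_k(y)E_{n-k}(z)=\frac r2\sum_{l=0}^{n-1}(-1)^l\binom sl\binom t{n-1-l}E_l(y)E_{n-1-l}(x).$$ (ii) If $r,s,t$ are complex numbers with $r+s+t=n$, then $$r\,M_n(s,t;x,y)+s\,M_n(t,r;y,z)+t\,M_n(r,s;z,x)=0,$$ where for complex $a,b,u,v$ we set $$M_n(a,b;u,v):=\sum_{k=0}^n(-1)^k\binom ak\binom b{n-k}B_{n-k}(u)B_k(v).$$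
   Context: Bernoulli numbers are defined by $B_0=1$ and $\sum_{k=0}^n\binom{n+1}kB_k=0$ for $n\ge1$; Euler numbers by $E_0=1$ and $\sum_{0\le k\le n,\,2\mid n-k}\binom nkE_k=0$ for $n\ge1$. The Bernoulli polynomials are $B_n(x)=\sum_{k=0}^n\binom nkB_kx^{n-k}$ and the Euler polynomials are $E_n(x)=\sum_{k=0}^n\binom nk\frac{E_k}{2^k}(x-\frac12)^{n-k}$. For complex $z$ and integer $k\ge0$, $\binom zk=z(z-1)\cdots(z-k+1)/k!$ (with $\binom z0=1$), and $\binom zk=0$ for negative integers $k$. *)

theory Defs
  imports Complex_Main
begin

function bern :: "nat \<Rightarrow> complex" where
  "bern n = (if n = 0 then 1
             else - (\<Sum>k<n. of_nat (Suc n choose k) * bern k) / of_nat (Suc n))"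
  by auto
termination by (relation "measure id") auto

function eul :: "nat \<Rightarrow> complex" where
  "eul n = (if n = 0 then 1
            else - (\<Sum>k\<in>{k. k < n \<and> even (n - k)}. of_nat (n choose k) * eul k))"
  by auto
termination by (relation "measure id") auto

definition bern_poly :: "nat \<Rightarrow> complex \<Rightarrow> complex" where
  "bern_poly n x = (\<Sum>k\<le>n. of_nat (n choose k) * bern k * x ^ (n - k))"

definition eul_poly :: "nat \<Rightarrow> complex \<Rightarrow> complex" where
  "eul_poly n x = (\<Sum>k\<le>n. of_nat (n choose k) * (eul k / 2 ^ k) * (x - 1/2) ^ (n - k))"

definition M_sum :: "nat \<Rightarrow> complex \<Rightarrow> complex \<Rightarrow> complex \<Rightarrow> complex \<Rightarrow> complex" where
  "M_sum n a b u v = (\<Sum>k\<le>n. (-1) ^ k * (a gchoose k) * (b gchoose (n - k))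
                         * bern_poly (n - k) u * bern_poly k v)"

end

theory Submission
  imports Defs "HOL-Complex_Analysis.Contour_Integration"
begin

(* Both identities are proved by induction on n through their defect D_n(r,s,t;x,y), the
   difference of the two sides with z = 1 - x - y. Since B_k and E_k are Appell sequences
   (P_k' = k P_(k-1)) and a binom(a-1,k) = (a-k) binom(a,k), the partial derivatives of D_n in x
   and y are t D_(n-1)(r,s,t-1) and -s D_(n-1)(r,s-1,t), defects of the same kind one level lower.
   Hence D_n is constant in x and y, and the constant is evaluated at special points: for (ii) by
   integrating over x in [0,1] at y = 0, using the integrals of B_p(1-x) B_q(x) and a telescoping
   sum of falling factorials; for (i) by adding the values at (x,y) = (0,0) and (0,1), using
   E_j(0) + E_j(1) = 2 [j = 0]. What is left vanishes since B_n = 0 for odd n > 1 and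
   E_n(0) = 0 for even n > 0. *)

section \<open>Bernoulli and Euler polynomials\<close>

declare bern.simps [simp del] eul.simps [simp del]

lemma bern_0 [simp]: "bern 0 = 1"
  by (simp add: bern.simps)

lemma bern_1: "bern 1 = - 1 / 2"
  by (subst bern.simps) simp

lemma bern_recurrence:
  assumes "n > 0"
  shows "(\<Sum>k\<le>n. of_nat (Suc n choose k) * bern k) = 0"
proof -
  have "of_nat (Suc n) * bern n = - (\<Sum>k<n. of_nat (Suc n choose k) * bern k)"
    using assms by (subst bern.simps) (simp add: field_simps del: of_nat_Suc)
  then show ?thesis
    by (simp add: lessThan_Suc_atMost [symmetric] del: of_nat_Suc)
qed

lemma bern_poly_0 [simp]: "bern_poly 0 x = 1"
  by (simp add: bern_poly_def)

lemma bern_poly_1: "bern_poly 1 x = x - 1 / 2"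
  using bern_1 by (simp add: bern_poly_def)

lemma bern_poly_at_0: "bern_poly m 0 = bern m"
proof -
  have "(\<Sum>k<m. of_nat (m choose k) * bern k * 0 ^ (m - k)) = (0::complex)"
    by (rule sum.neutral) simp
  then show ?thesis
    by (simp add: bern_poly_def lessThan_Suc_atMost [symmetric])
qed

lemma bern_poly_at_1: "bern_poly m 1 = bern m + (if m = 1 then 1 else 0)"
proof (cases "m \<le> 1")
  case True
  then consider "m = 0" | "m = 1" by linarith
  then show ?thesis by cases (simp_all add: bern_poly_def bern_1)
next
  case False
  then obtain n where "m = Suc n" "n > 0" by (cases m) auto
  then show ?thesis
    using bern_recurrence [of n] by (simp add: bern_poly_def)
qed

lemma eul_0 [simp]: "eul 0 = 1"
  by (simp add: eul.simps)

lemma eul_odd: "odd n \<Longrightarrow> eul n = 0"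
proof (induction n rule: less_induct)
  case (less n)
  have "(\<Sum>k\<in>{k. k < n \<and> even (n - k)}. of_nat (n choose k) * eul k) = 0"
  proof (rule sum.neutral, safe)
    fix k assume "k < n" "even (n - k)"
    with less.prems have "odd k" by (simp add: even_diff_nat)
    with less.IH \<open>k < n\<close> show "of_nat (n choose k) * eul k = 0" by simp
  qed
  with less.prems show ?case by (subst eul.simps) (auto elim: oddE)
qed

lemma eul_recurrence:
  assumes "n > 0"
  shows "(\<Sum>k\<in>{k. k \<le> n \<and> even (n - k)}. of_nat (n choose k) * eul k) = 0"
proof -
  have "{k. k \<le> n \<and> even (n - k)} = insert n {k. k < n \<and> even (n - k)}" by auto
  with assms show ?thesis by (simp add: eul.simps [of n])
qed

lemma neg_one_power_diff_mult_eul: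
  assumes "k \<le> m"
  shows "(-1) ^ (m - k) * eul k = (-1) ^ m * eul k"
proof (cases "even k")
  case True
  then have "(-1) ^ (m + k) = ((-1) ^ m :: complex)" by (simp add: power_add)
  with assms show ?thesis by (simp add: neg_one_power_add_eq_neg_one_power_diff)
qed (simp add: eul_odd)

lemma eul_poly_0 [simp]: "eul_poly 0 x = 1"
  by (simp add: eul_poly_def)

lemma eul_poly_1: "eul_poly 1 x = x - 1 / 2"
proof -
  have "eul 1 = 0" by (simp add: eul_odd)
  then show ?thesis by (simp add: eul_poly_def)
qed

lemma eul_poly_reflect: "eul_poly m (1 - x) = (-1) ^ m * eul_poly m x"
  unfolding eul_poly_def sum_distrib_left
proof (rule sum.cong)
  fix k assume "k \<in> {..m}"
  then have sign: "(-1) ^ (m - k) * eul k = (-1) ^ m * eul k"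
    by (simp add: neg_one_power_diff_mult_eul)
  have "1 - x - 1 / 2 = - (x - 1 / 2)" by simp
  then have "of_nat (m choose k) * (eul k / 2 ^ k) * (1 - x - 1 / 2) ^ (m - k)
      = of_nat (m choose k) * (((-1) ^ (m - k) * eul k) / 2 ^ k) * (x - 1 / 2) ^ (m - k)"
    by (simp only: power_minus [of "x - 1 / 2"])
      (simp only: mult_ac times_divide_eq_left times_divide_eq_right)
  also have "\<dots> = (-1) ^ m * (of_nat (m choose k) * (eul k / 2 ^ k) * (x - 1 / 2) ^ (m - k))"
    unfolding sign by (simp only: mult_ac times_divide_eq_left times_divide_eq_right)
  finally show "of_nat (m choose k) * (eul k / 2 ^ k) * (1 - x - 1 / 2) ^ (m - k)
      = (-1) ^ m * (of_nat (m choose k) * (eul k / 2 ^ k) * (x - 1 / 2) ^ (m - k))" .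
qed simp

lemma eul_poly_at_1: "eul_poly m 1 = (\<Sum>k\<le>m. of_nat (m choose k) * eul k) / 2 ^ m"
  unfolding eul_poly_def sum_divide_distrib
proof (rule sum.cong)
  fix k assume "k \<in> {..m}"
  then have "(2::complex) ^ k * 2 ^ (m - k) = 2 ^ m"
    by (simp flip: power_add)
  then show "of_nat (m choose k) * (eul k / 2 ^ k) * (1 - 1 / 2) ^ (m - k)
      = of_nat (m choose k) * eul k / 2 ^ m"
    by (simp add: field_simps power_divide)
qed simp

lemma eul_poly_at_1_even:
  assumes "m > 0" "even m"
  shows "eul_poly m 1 = 0"
proof -
  have "(\<Sum>k\<le>m. of_nat (m choose k) * eul k)
      = (\<Sum>k\<in>{k. k \<le> m \<and> even (m - k)}. of_nat (m choose k) * eul k)"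
    by (rule sum.mono_neutral_right) (use \<open>even m\<close> in \<open>auto simp: eul_odd even_diff_nat\<close>)
  with eul_recurrence [OF \<open>m > 0\<close>] show ?thesis
    by (simp add: eul_poly_at_1)
qed

lemma eul_poly_at_0_even: "m > 0 \<Longrightarrow> even m \<Longrightarrow> eul_poly m 0 = 0"
  using eul_poly_reflect [of m 1] eul_poly_at_1_even by simp

lemma eul_poly_at_1_add_at_0: "eul_poly m 1 + eul_poly m 0 = (if m = 0 then 2 else 0)"
  using eul_poly_reflect [of m 1] eul_poly_at_1_even [of m] by (cases "even m") (auto elim: oddE)

definition appell_poly :: "(nat \<Rightarrow> complex) \<Rightarrow> complex \<Rightarrow> nat \<Rightarrow> complex \<Rightarrow> complex" where
  "appell_poly e c n x = (\<Sum>k\<le>n. of_nat (n choose k) * e k * (x - c) ^ (n - k))"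

lemma appell_poly_has_field_derivative:
  "(appell_poly e c n has_field_derivative of_nat n * appell_poly e c (n - 1) x) (at x)"
proof (cases n)
  case 0
  then have "appell_poly e c n = (\<lambda>_. e 0)"
    by (simp add: fun_eq_iff appell_poly_def)
  with 0 show ?thesis by simp
next
  case (Suc m)
  have "((\<lambda>x. of_nat (Suc m choose k) * e k * (x - c) ^ (Suc m - k)) has_field_derivative
      of_nat (Suc m) * (of_nat (m choose k) * e k * (x - c) ^ (m - k))) (at x)" if "k \<le> m" for k
  proof -
    have absorb: "of_nat (Suc (m - k)) * of_nat (Suc m choose k)
        = (of_nat (Suc m) * of_nat (m choose k) :: complex)"
      using binomial_absorb_comp [of "Suc m" k] that
      by (simp flip: of_nat_mult del: of_nat_Suc add: Suc_diff_le)
    have "((\<lambda>x. (x - c) ^ Suc (m - k)) has_field_derivative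
        of_nat (Suc (m - k)) * ((1 - 0) * (x - c) ^ (Suc (m - k) - Suc 0))) (at x)"
      by (intro DERIV_power DERIV_diff DERIV_ident DERIV_const)
    then have "((\<lambda>x. (x - c) ^ Suc (m - k)) has_field_derivative
        of_nat (Suc (m - k)) * (x - c) ^ (m - k)) (at x)"
      by (simp only: diff_Suc_Suc diff_zero minus_nat.diff_0 mult_1_left)
    note DERIV_cmult [OF this, of "of_nat (Suc m choose k) * e k"]
    moreover have "of_nat (Suc m choose k) * e k * (of_nat (Suc (m - k)) * (x - c) ^ (m - k))
        = e k * (x - c) ^ (m - k) * (of_nat (Suc (m - k)) * of_nat (Suc m choose k))"
      by (simp only: mult_ac)
    ultimately show ?thesis
      unfolding absorb Suc_diff_le [OF that] by (simp only: mult_ac)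
  qed
  then have "((\<lambda>x. e (Suc m) + (\<Sum>k\<le>m. of_nat (Suc m choose k) * e k * (x - c) ^ (Suc m - k)))
      has_field_derivative
        0 + (\<Sum>k\<le>m. of_nat (Suc m) * (of_nat (m choose k) * e k * (x - c) ^ (m - k)))) (at x)"
    by (intro DERIV_add DERIV_const DERIV_sum) simp
  moreover have "appell_poly e c (Suc m)
      = (\<lambda>x. e (Suc m) + (\<Sum>k\<le>m. of_nat (Suc m choose k) * e k * (x - c) ^ (Suc m - k)))"
    by (simp add: fun_eq_iff appell_poly_def)
  ultimately show ?thesis
    using Suc by (simp add: appell_poly_def sum_distrib_left del: of_nat_Suc)
qed

lemma bern_poly_has_field_derivative:
  "(bern_poly n has_field_derivative of_nat n * bern_poly (n - 1) x) (at x)"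
proof -
  have "bern_poly = appell_poly bern 0"
    by (simp add: fun_eq_iff bern_poly_def appell_poly_def)
  show ?thesis unfolding \<open>_ = _\<close> by (rule appell_poly_has_field_derivative)
qed

lemma eul_poly_has_field_derivative:
  "(eul_poly n has_field_derivative of_nat n * eul_poly (n - 1) x) (at x)"
proof -
  have "eul_poly = appell_poly (\<lambda>k. eul k / 2 ^ k) (1 / 2)"
    by (simp add: fun_eq_iff eul_poly_def appell_poly_def)
  show ?thesis unfolding \<open>_ = _\<close> by (rule appell_poly_has_field_derivative)
qed

lemma has_contour_integral_unit_segment_primitive:
  assumes "\<And>x. (F has_field_derivative f x) (at x)"
  shows "(f has_contour_integral F 1 - F 0) (linepath 0 1)"
  using contour_integral_primitive [of UNIV F f "linepath 0 1"] assms by simp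

lemma has_contour_integral_unit_segment_by_parts:
  assumes f: "\<And>x. (f has_field_derivative f' x) (at x)"
    and g: "\<And>x. (g has_field_derivative g' x) (at x)"
    and I: "((\<lambda>x. f' x * g x) has_contour_integral I) (linepath 0 1)"
  shows "((\<lambda>x. f x * g' x) has_contour_integral f 1 * g 1 - f 0 * g 0 - I) (linepath 0 1)"
proof -
  have "((\<lambda>x. f' x * g x + f x * g' x) has_contour_integral f 1 * g 1 - f 0 * g 0) (linepath 0 1)"
    by (rule has_contour_integral_unit_segment_primitive [where F = "\<lambda>x. f x * g x"])
      (rule DERIV_cong [OF DERIV_mult [OF f g]], simp)
  from has_contour_integral_diff [OF this I] show ?thesis by simp
qed

lemma has_contour_integral_unit_segment_const_eq:
  assumes "((\<lambda>_. c) has_contour_integral I) (linepath 0 1)"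
  shows "c = I"
  using has_contour_integral_unique [OF has_contour_integral_const_linepath assms] by simp

lemma bern_poly_reflect_has_field_derivative:
  "((\<lambda>x. bern_poly n (1 - x)) has_field_derivative - (of_nat n * bern_poly (n - 1) (1 - x))) (at x)"
  by (rule DERIV_cong [OF DERIV_chain2 [OF bern_poly_has_field_derivative
        DERIV_diff [OF DERIV_const DERIV_ident]]]) simp

lemma bern_poly_integral:
  "((\<lambda>x. bern_poly m x) has_contour_integral (if m = 0 then 1 else 0)) (linepath 0 1)"
proof -
  have "((\<lambda>x. bern_poly (Suc m) x / of_nat (Suc m)) has_field_derivative bern_poly m x) (at x)" for x
    by (rule DERIV_cong [OF DERIV_cdivide [OF bern_poly_has_field_derivative]]) (simp del: of_nat_Suc)
  from has_contour_integral_unit_segment_primitive [OF this] show ?thesis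
    by (cases "m = 0") (simp_all add: bern_poly_at_0 bern_poly_at_1)
qed

lemma bern_poly_reflect_integral:
  "((\<lambda>x. bern_poly m (1 - x)) has_contour_integral (if m = 0 then 1 else 0)) (linepath 0 1)"
proof -
  have "((\<lambda>x. - bern_poly (Suc m) (1 - x) / of_nat (Suc m)) has_field_derivative
      bern_poly m (1 - x)) (at x)" for x
    by (rule DERIV_cong [OF DERIV_cdivide [OF DERIV_minus [OF bern_poly_reflect_has_field_derivative]]])
      (simp del: of_nat_Suc)
  from has_contour_integral_unit_segment_primitive [OF this] show ?thesis
    by (cases "m = 0") (simp_all add: bern_poly_at_0 bern_poly_at_1)
qed

lemma bern_poly_reflect: "(-1) ^ n * bern_poly n (1 - x) = bern_poly n x"
proof -
  define D where "D n x = (-1) ^ n * bern_poly n (1 - x) - bern_poly n x" for n x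
  have "D n x = 0" for x
  proof (induction n arbitrary: x)
    case 0
    then show ?case by (simp add: D_def)
  next
    case (Suc m)
    have "(D (Suc m) has_field_derivative 0) (at x)" for x
    proof -
      have "(D (Suc m) has_field_derivative of_nat (Suc m) * D m x) (at x)"
        unfolding D_def [abs_def]
        by (rule DERIV_cong [OF DERIV_diff [OF DERIV_cmult [OF bern_poly_reflect_has_field_derivative]
              bern_poly_has_field_derivative]]) (simp add: algebra_simps)
      then show ?thesis by (simp add: Suc.IH)
    qed
    then obtain c where c: "\<And>x. D (Suc m) x = c"
      using has_field_derivative_zero_constant [of UNIV "D (Suc m)"] by auto
    have "((\<lambda>x. (-1) ^ Suc m * bern_poly (Suc m) (1 - x) - bern_poly (Suc m) x) has_contour_integral
        (-1) ^ Suc m * (if Suc m = 0 then 1 else 0) - (if Suc m = 0 then 1 else 0)) (linepath 0 1)"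
      by (intro has_contour_integral_diff has_contour_integral_lmul
          bern_poly_reflect_integral bern_poly_integral)
    then have "((\<lambda>_. c) has_contour_integral 0) (linepath 0 1)"
      using c by (simp add: D_def)
    then show ?case
      using c has_contour_integral_unit_segment_const_eq by blast
  qed
  then show ?thesis by (simp add: D_def)
qed

lemma bern_odd: "odd n \<Longrightarrow> n \<noteq> 1 \<Longrightarrow> bern n = 0"
  using bern_poly_reflect [of n 0] by (simp add: bern_poly_at_0 bern_poly_at_1)

definition bern_product_integral :: "nat \<Rightarrow> nat \<Rightarrow> complex" where
  "bern_product_integral p q =
     (if p = 0 \<or> q = 0 then (if p = 0 \<and> q = 0 then 1 else 0)
      else - (fact p * fact q / fact (p + q)) * bern (p + q))"

lemma bern_product_has_contour_integral:
  "((\<lambda>x. bern_poly p (1 - x) * bern_poly q x) has_contour_integral bern_product_integral p q)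
    (linepath 0 1)"
proof (induction p arbitrary: q)
  case 0
  have "bern_product_integral 0 q = (if q = 0 then 1 else 0)"
    by (simp add: bern_product_integral_def)
  with bern_poly_integral [of q] show ?case
    by (simp only: bern_poly_0 mult_1_left)
next
  case (Suc p)
  show ?case
  proof (cases "q = 0")
    case True
    then have "bern_product_integral (Suc p) q = (if Suc p = 0 then 1 else 0)"
      by (simp add: bern_product_integral_def)
    with bern_poly_reflect_integral [of "Suc p"] \<open>q = 0\<close> show ?thesis
      by (simp only: bern_poly_0 mult_1_right)
  next
    case False
    have f: "((\<lambda>x. bern_poly (Suc p) (1 - x)) has_field_derivative
        - (of_nat (Suc p) * bern_poly p (1 - x))) (at x)" for x
      using bern_poly_reflect_has_field_derivative [of "Suc p" x] by simp
    have g: "((\<lambda>x. bern_poly (Suc q) x / of_nat (Suc q)) has_field_derivative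
        bern_poly q x) (at x)" for x
      by (rule DERIV_cong [OF DERIV_cdivide [OF bern_poly_has_field_derivative]]) (simp del: of_nat_Suc)
    have "((\<lambda>x. - (of_nat (Suc p) * bern_poly p (1 - x)) * (bern_poly (Suc q) x / of_nat (Suc q)))
        has_contour_integral - (of_nat (Suc p) / of_nat (Suc q)) * bern_product_integral p (Suc q))
        (linepath 0 1)"
      by (rule has_contour_integral_eq [OF has_contour_integral_lmul [OF Suc.IH]]) simp
    from has_contour_integral_unit_segment_by_parts [OF f g this]
    have "((\<lambda>x. bern_poly (Suc p) (1 - x) * bern_poly q x) has_contour_integral
        bern_poly (Suc p) 0 * (bern_poly (Suc q) 1 / of_nat (Suc q))
        - bern_poly (Suc p) 1 * (bern_poly (Suc q) 0 / of_nat (Suc q))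
        + of_nat (Suc p) / of_nat (Suc q) * bern_product_integral p (Suc q)) (linepath 0 1)"
      by simp
    moreover have "bern_poly (Suc p) 0 * (bern_poly (Suc q) 1 / of_nat (Suc q))
        - bern_poly (Suc p) 1 * (bern_poly (Suc q) 0 / of_nat (Suc q))
        + of_nat (Suc p) / of_nat (Suc q) * bern_product_integral p (Suc q)
        = bern_product_integral (Suc p) q"
    proof (cases "p = 0")
      case True
      with \<open>q \<noteq> 0\<close> show ?thesis
        by (simp add: bern_poly_at_0 bern_poly_at_1 bern_product_integral_def field_simps
            del: of_nat_Suc)
    next
      case False
      have "p + Suc q = Suc p + q" by simp
      with False \<open>q \<noteq> 0\<close> show ?thesis
        by (simp add: bern_poly_at_0 bern_poly_at_1 bern_product_integral_def field_simps
            del: of_nat_Suc)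
    qed
    ultimately show ?thesis by (simp only:)
  qed
qed

section \<open>Alternating binomial convolutions\<close>

definition bconv :: "nat \<Rightarrow> 'a \<Rightarrow> 'a \<Rightarrow> (nat \<Rightarrow> 'a) \<Rightarrow> (nat \<Rightarrow> 'a) \<Rightarrow> 'a::field_char_0" where
  "bconv n a b F H = (\<Sum>k\<le>n. (-1) ^ k * (a gchoose k) * (b gchoose (n - k)) * F k * H (n - k))"

lemma bconv_absorb:
  "a * bconv m (a - 1) b F H + b * bconv m a (b - 1) F H = (a + b - of_nat m) * bconv m a b F H"
  unfolding bconv_def sum_distrib_left sum.distrib [symmetric]
proof (rule sum.cong)
  fix k assume "k \<in> {..m}"
  then have m: "of_nat m = of_nat k + (of_nat (m - k) :: 'a)"
    by (simp flip: of_nat_add)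
  have binomials: "a * ((a - 1) gchoose k) * (b gchoose (m - k))
      + (a gchoose k) * (b * ((b - 1) gchoose (m - k)))
      = (a + b - of_nat m) * ((a gchoose k) * (b gchoose (m - k)))"
    unfolding m by (simp flip: gbinomial_absorb_comp add: algebra_simps)
  have "a * ((-1) ^ k * ((a - 1) gchoose k) * (b gchoose (m - k)) * F k * H (m - k))
      + b * ((-1) ^ k * (a gchoose k) * ((b - 1) gchoose (m - k)) * F k * H (m - k))
      = (-1) ^ k * F k * H (m - k) * (a * ((a - 1) gchoose k) * (b gchoose (m - k))
          + (a gchoose k) * (b * ((b - 1) gchoose (m - k))))"
    by (simp add: algebra_simps)
  also have "\<dots>
      = (a + b - of_nat m) * ((-1) ^ k * (a gchoose k) * (b gchoose (m - k)) * F k * H (m - k))"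
    unfolding binomials by (simp add: algebra_simps)
  finally show "a * ((-1) ^ k * ((a - 1) gchoose k) * (b gchoose (m - k)) * F k * H (m - k))
      + b * ((-1) ^ k * (a gchoose k) * ((b - 1) gchoose (m - k)) * F k * H (m - k))
      = (a + b - of_nat m) * ((-1) ^ k * (a gchoose k) * (b gchoose (m - k)) * F k * H (m - k))" .
qed simp

lemma bconv_Suc_shift_left:
  "bconv (Suc m) a b (\<lambda>k. of_nat k * F (k - 1)) H = - a * bconv m (a - 1) b F H"
proof -
  have "bconv (Suc m) a b (\<lambda>k. of_nat k * F (k - 1)) H
      = (\<Sum>k\<le>m. (-1) ^ Suc k * (a gchoose Suc k) * (b gchoose (m - k))
          * (of_nat (Suc k) * F k) * H (m - k))"
    unfolding bconv_def by (subst sum.atMost_Suc_shift) simp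
  also have "\<dots> = (\<Sum>k\<le>m. - a * ((-1) ^ k * ((a - 1) gchoose k) * (b gchoose (m - k)) * F k * H (m - k)))"
  proof (rule sum.cong)
    fix k
    show "(-1) ^ Suc k * (a gchoose Suc k) * (b gchoose (m - k))
          * (of_nat (Suc k) * F k) * H (m - k)
        = - a * ((-1) ^ k * ((a - 1) gchoose k) * (b gchoose (m - k)) * F k * H (m - k))"
      using gbinomial_absorption [of k a] by (simp add: algebra_simps del: of_nat_Suc)
  qed simp
  finally show ?thesis by (simp add: bconv_def sum_distrib_left)
qed

lemma bconv_Suc_shift_right:
  "bconv (Suc m) a b F (\<lambda>j. of_nat j * H (j - 1)) = b * bconv m a (b - 1) F H"
proof -
  have "bconv (Suc m) a b F (\<lambda>j. of_nat j * H (j - 1))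
      = (\<Sum>k\<le>m. (-1) ^ k * (a gchoose k) * (b gchoose (Suc m - k))
          * F k * (of_nat (Suc m - k) * H (Suc m - k - 1)))"
    unfolding bconv_def by (simp add: sum.atMost_Suc)
  also have "\<dots> = (\<Sum>k\<le>m. b * ((-1) ^ k * (a gchoose k) * ((b - 1) gchoose (m - k)) * F k * H (m - k)))"
  proof (rule sum.cong)
    fix k assume "k \<in> {..m}"
    then have "Suc m - k = Suc (m - k)" by auto
    then show "(-1) ^ k * (a gchoose k) * (b gchoose (Suc m - k))
          * F k * (of_nat (Suc m - k) * H (Suc m - k - 1))
        = b * ((-1) ^ k * (a gchoose k) * ((b - 1) gchoose (m - k)) * F k * H (m - k))"
      using gbinomial_absorption [of "m - k" b] by (simp add: algebra_simps del: of_nat_Suc)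
  qed simp
  finally show ?thesis by (simp add: bconv_def sum_distrib_left)
qed

lemma bconv_mult_left: "bconv n a b (\<lambda>k. F k * c) H = c * bconv n a b F H"
  by (simp add: bconv_def sum_distrib_left algebra_simps)

lemma bconv_mult_right: "bconv n a b F (\<lambda>j. H j * c) = c * bconv n a b F H"
  by (simp add: bconv_def sum_distrib_left algebra_simps)

lemma bconv_add_left: "bconv n a b (\<lambda>k. F k + G k) H = bconv n a b F H + bconv n a b G H"
  by (simp add: bconv_def sum.distrib algebra_simps)

lemma bconv_add_right: "bconv n a b F (\<lambda>j. H j + G j) = bconv n a b F H + bconv n a b F G"
  by (simp add: bconv_def sum.distrib algebra_simps)

lemma bconv_delta_left:
  assumes "i \<le> n"
  shows "bconv n a b (\<lambda>k. if k = i then c else 0) H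
    = (-1) ^ i * (a gchoose i) * (b gchoose (n - i)) * c * H (n - i)"
proof -
  have "bconv n a b (\<lambda>k. if k = i then c else 0) H
      = (\<Sum>k\<le>n. if k = i then (-1) ^ k * (a gchoose k) * (b gchoose (n - k)) * c * H (n - k) else 0)"
    unfolding bconv_def by (rule sum.cong) auto
  with assms show ?thesis by simp
qed

lemma bconv_delta_right:
  "bconv n a b F (\<lambda>j. if j = 0 then c else 0) = (-1) ^ n * (a gchoose n) * F n * c"
proof -
  have "bconv n a b F (\<lambda>j. if j = 0 then c else 0)
      = (\<Sum>k\<le>n. if k = n then (-1) ^ k * (a gchoose k) * (b gchoose (n - k)) * F k * c else 0)"
    unfolding bconv_def by (rule sum.cong) auto
  then show ?thesis by simp
qed

lemma bconv_has_field_derivative: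
  fixes P Q :: "nat \<Rightarrow> complex \<Rightarrow> complex" and u v :: "complex \<Rightarrow> complex"
  assumes P: "\<And>k z. (P k has_field_derivative of_nat k * P (k - 1) z) (at z)"
    and Q: "\<And>k z. (Q k has_field_derivative of_nat k * Q (k - 1) z) (at z)"
    and u: "(u has_field_derivative u') (at w)" and v: "(v has_field_derivative v') (at w)"
  shows "((\<lambda>w. bconv (Suc m) a b (\<lambda>k. P k (u w)) (\<lambda>j. Q j (v w))) has_field_derivative
      b * v' * bconv m a (b - 1) (\<lambda>k. P k (u w)) (\<lambda>j. Q j (v w))
      - a * u' * bconv m (a - 1) b (\<lambda>k. P k (u w)) (\<lambda>j. Q j (v w))) (at w)"
proof -
  let ?c = "\<lambda>k. (-1) ^ k * (a gchoose k) * (b gchoose (Suc m - k))"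
  have "((\<lambda>w. ?c k * P k (u w) * Q (Suc m - k) (v w)) has_field_derivative
      ?c k * (of_nat k * (P (k - 1) (u w) * u')) * Q (Suc m - k) (v w)
      + ?c k * P k (u w) * (of_nat (Suc m - k) * (Q (Suc m - k - 1) (v w) * v'))) (at w)" for k
    by (rule DERIV_cong [OF DERIV_mult [OF DERIV_cmult [OF DERIV_chain2 [OF P u]]
          DERIV_chain2 [OF Q v]]]) (simp add: algebra_simps)
  then have "((\<lambda>w. bconv (Suc m) a b (\<lambda>k. P k (u w)) (\<lambda>j. Q j (v w))) has_field_derivative
      bconv (Suc m) a b (\<lambda>k. of_nat k * (P (k - 1) (u w) * u')) (\<lambda>j. Q j (v w))
      + bconv (Suc m) a b (\<lambda>k. P k (u w)) (\<lambda>j. of_nat j * (Q (j - 1) (v w) * v'))) (at w)"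
    unfolding bconv_def sum.distrib [symmetric] by (intro DERIV_sum)
  then show ?thesis
    unfolding bconv_Suc_shift_left [where F = "\<lambda>k. P k (u w) * u'"]
      bconv_Suc_shift_right [where H = "\<lambda>j. Q j (v w) * v'"] bconv_mult_left bconv_mult_right
    by (simp add: algebra_simps)
qed

definition ffact :: "'a::comm_ring_1 \<Rightarrow> nat \<Rightarrow> 'a" where
  "ffact a k = (\<Prod>i<k. a - of_nat i)"

lemma ffact_0 [simp]: "ffact a 0 = 1"
  by (simp add: ffact_def)

lemma ffact_Suc: "ffact a (Suc k) = ffact a k * (a - of_nat k)"
  by (simp add: ffact_def)

lemma gbinomial_mult_fact_eq_ffact: "(a gchoose k) * fact k = ffact a k"
  by (simp add: ffact_def gbinomial_mult_fact' atLeast0LessThan)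

lemma ffact_alternating_convolution:
  "(r + s - of_nat n) * (\<Sum>k\<le>n. (-1) ^ k * ffact r k * ffact s (n - k))
    = ffact s (Suc n) + (-1) ^ n * ffact r (Suc n)"
proof -
  define f where "f k = (-1) ^ k * ffact r k * ffact s (Suc n - k)" for k
  have "(r + s - of_nat n) * (\<Sum>k\<le>n. (-1) ^ k * ffact r k * ffact s (n - k))
      = (\<Sum>k\<le>n. f k - f (Suc k))"
    unfolding sum_distrib_left
  proof (rule sum.cong)
    fix k assume "k \<in> {..n}"
    then have "Suc n - k = Suc (n - k)" and "of_nat (n - k) = of_nat n - (of_nat k :: 'a)"
      by (auto simp: of_nat_diff)
    then show "(r + s - of_nat n) * ((-1) ^ k * ffact r k * ffact s (n - k)) = f k - f (Suc k)"
      unfolding f_def by (simp add: ffact_Suc algebra_simps)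
  qed simp
  also have "\<dots> = f 0 - f (Suc n)"
    by (rule sum_telescope)
  finally show ?thesis
    by (simp add: f_def)
qed

section \<open>Induction on the degree through partial derivatives\<close>

lemma eq_origin_if_partial_derivatives_zero:
  fixes f :: "complex \<Rightarrow> complex \<Rightarrow> complex"
  assumes dx: "\<And>x y. ((\<lambda>x. f x y) has_field_derivative 0) (at x)"
    and dy: "\<And>x y. ((\<lambda>y. f x y) has_field_derivative 0) (at y)"
  shows "f x y = f 0 0"
proof -
  obtain c where "\<forall>x\<in>UNIV. f x y = c"
    using has_field_derivative_zero_constant [of UNIV "\<lambda>x. f x y"] dx by auto
  moreover obtain d where "\<forall>y\<in>UNIV. f 0 y = d"
    using has_field_derivative_zero_constant [of UNIV "\<lambda>y. f 0 y"] dy by auto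
  ultimately show ?thesis by (metis UNIV_I)
qed

lemma vanishing_by_derivative_induction:
  fixes F :: "nat \<Rightarrow> complex \<Rightarrow> complex \<Rightarrow> complex \<Rightarrow> complex \<Rightarrow> complex \<Rightarrow> complex"
  assumes deriv: "\<And>m r s t u u' v v' w. r + s + t = of_nat (Suc m) \<Longrightarrow>
      (u has_field_derivative u') (at w) \<Longrightarrow> (v has_field_derivative v') (at w) \<Longrightarrow>
      ((\<lambda>w. F (Suc m) r s t (u w) (v w)) has_field_derivative
        u' * t * F m r s (t - 1) (u w) (v w) - v' * s * F m r (s - 1) t (u w) (v w)) (at w)"
    and base: "\<And>r s t x y. r + s + t = 0 \<Longrightarrow> F 0 r s t x y = 0"
    and at_origin: "\<And>m r s t. r + s + t = of_nat (Suc m) \<Longrightarrow>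
      (\<And>x y. F (Suc m) r s t x y = F (Suc m) r s t 0 0) \<Longrightarrow> F (Suc m) r s t 0 0 = 0"
    and rst: "r + s + t = of_nat n"
  shows "F n r s t x y = 0"
  using rst
proof (induction n arbitrary: r s t x y)
  case 0
  then show ?case by (simp add: base)
next
  case (Suc m)
  have "r + s + (t - 1) = of_nat m" "r + (s - 1) + t = of_nat m"
    using Suc.prems by (simp_all add: algebra_simps)
  then have lower: "F m r s (t - 1) x y = 0" "F m r (s - 1) t x y = 0" for x y
    by (simp_all add: Suc.IH)
  have "F (Suc m) r s t x y = F (Suc m) r s t 0 0" for x y
  proof (rule eq_origin_if_partial_derivatives_zero)
    fix x y
    show "((\<lambda>x. F (Suc m) r s t x y) has_field_derivative 0) (at x)"
      by (rule DERIV_cong [OF deriv [OF Suc.prems DERIV_ident DERIV_const]]) (simp add: lower)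
    show "((\<lambda>y. F (Suc m) r s t x y) has_field_derivative 0) (at y)"
      by (rule DERIV_cong [OF deriv [OF Suc.prems DERIV_const DERIV_ident]]) (simp add: lower)
  qed
  with at_origin [OF Suc.prems] show ?case by metis
qed

section \<open>The cyclic identity for Bernoulli polynomials\<close>

lemma M_sum_bconv: "M_sum n a b u v = bconv n a b (\<lambda>k. bern_poly k v) (\<lambda>j. bern_poly j u)"
  unfolding M_sum_def bconv_def by (rule sum.cong) (simp_all add: mult_ac)

lemma M_sum_absorb:
  "a * M_sum m (a - 1) b u v + b * M_sum m a (b - 1) u v = (a + b - of_nat m) * M_sum m a b u v"
  unfolding M_sum_bconv by (rule bconv_absorb)

lemma M_sum_has_field_derivative:
  assumes "(u has_field_derivative u') (at w)" "(v has_field_derivative v') (at w)"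
  shows "((\<lambda>w. M_sum (Suc m) a b (u w) (v w)) has_field_derivative
    b * u' * M_sum m a (b - 1) (u w) (v w) - a * v' * M_sum m (a - 1) b (u w) (v w)) (at w)"
  unfolding M_sum_bconv
  by (rule DERIV_cong [OF bconv_has_field_derivative [OF bern_poly_has_field_derivative
        bern_poly_has_field_derivative assms(2,1)]]) (simp add: algebra_simps)

definition bern_cyclic_sum :: "nat \<Rightarrow> complex \<Rightarrow> complex \<Rightarrow> complex \<Rightarrow> complex \<Rightarrow> complex \<Rightarrow> complex" where
  "bern_cyclic_sum n r s t x y =
     r * M_sum n s t x y + s * M_sum n t r y (1 - x - y) + t * M_sum n r s (1 - x - y) x"

lemma bern_cyclic_sum_has_field_derivative:
  assumes rst: "r + s + t = of_nat (Suc m)"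
    and u: "(u has_field_derivative u') (at w)" and v: "(v has_field_derivative v') (at w)"
  shows "((\<lambda>w. bern_cyclic_sum (Suc m) r s t (u w) (v w)) has_field_derivative
    u' * t * bern_cyclic_sum m r s (t - 1) (u w) (v w)
    - v' * s * bern_cyclic_sum m r (s - 1) t (u w) (v w)) (at w)"
proof -
  define z where "z w = 1 - u w - v w" for w
  have z: "(z has_field_derivative - u' - v') (at w)"
    unfolding z_def by (rule DERIV_cong [OF DERIV_diff [OF DERIV_diff [OF DERIV_const u] v]]) simp
  let ?x = "u w" and ?y = "v w" and ?z = "z w"
  have "((\<lambda>w. bern_cyclic_sum (Suc m) r s t (u w) (v w)) has_field_derivative
      r * (t * u' * M_sum m s (t - 1) ?x ?y - s * v' * M_sum m (s - 1) t ?x ?y)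
    + s * (r * v' * M_sum m t (r - 1) ?y ?z - t * (- u' - v') * M_sum m (t - 1) r ?y ?z)
    + t * (s * (- u' - v') * M_sum m r (s - 1) ?z ?x - r * u' * M_sum m (r - 1) s ?z ?x)) (at w)"
    (is "(_ has_field_derivative ?D) _")
    unfolding bern_cyclic_sum_def z_def [symmetric]
    by (intro DERIV_add DERIV_cmult M_sum_has_field_derivative u v z)
  also have "?D = u' * t * (r * M_sum m s (t - 1) ?x ?y + s * M_sum m (t - 1) r ?y ?z
        - (r * M_sum m (r - 1) s ?z ?x + s * M_sum m r (s - 1) ?z ?x))
    - v' * s * (r * M_sum m (s - 1) t ?x ?y + t * M_sum m r (s - 1) ?z ?x
        - (t * M_sum m (t - 1) r ?y ?z + r * M_sum m t (r - 1) ?y ?z))"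
    by (simp add: algebra_simps)
  also have "\<dots>
      = u' * t * bern_cyclic_sum m r s (t - 1) ?x ?y - v' * s * bern_cyclic_sum m r (s - 1) t ?x ?y"
  proof -
    have rs: "r + s - of_nat m = 1 - t" and tr: "t + r - of_nat m = 1 - s"
      using rst by (simp_all add: algebra_simps)
    show ?thesis
      unfolding M_sum_absorb rs tr bern_cyclic_sum_def z_def by (simp add: algebra_simps)
  qed
  finally show ?thesis .
qed

lemma M_sum_has_contour_integral:
  assumes "\<And>k. k \<le> n \<Longrightarrow>
    ((\<lambda>x. bern_poly (n - k) (U x) * bern_poly k (V x)) has_contour_integral I k) (linepath 0 1)"
  shows "((\<lambda>x. M_sum n a b (U x) (V x)) has_contour_integral
    (\<Sum>k\<le>n. (-1) ^ k * (a gchoose k) * (b gchoose (n - k)) * I k)) (linepath 0 1)"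
  unfolding M_sum_def mult.assoc [of _ "bern_poly _ _"]
  by (intro has_contour_integral_sum has_contour_integral_lmul assms) auto

lemma M_sum_integral_fst:
  "((\<lambda>x. M_sum n a b x v) has_contour_integral (-1) ^ n * (a gchoose n) * bern_poly n v) (linepath 0 1)"
proof -
  have "((\<lambda>x. M_sum n a b x v) has_contour_integral (\<Sum>k\<le>n. (-1) ^ k * (a gchoose k)
      * (b gchoose (n - k)) * ((if n - k = 0 then 1 else 0) * bern_poly k v))) (linepath 0 1)"
    (is "(_ has_contour_integral ?I) _")
    by (intro M_sum_has_contour_integral has_contour_integral_rmul bern_poly_integral)
  also have "?I = bconv n a b (\<lambda>k. bern_poly k v) (\<lambda>j. if j = 0 then 1 else 0)"
    unfolding bconv_def by (simp add: mult_ac)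
  also have "\<dots> = (-1) ^ n * (a gchoose n) * bern_poly n v"
    by (simp add: bconv_delta_right)
  finally show ?thesis .
qed

lemma M_sum_integral_snd_reflect:
  "((\<lambda>x. M_sum n a b u (1 - x)) has_contour_integral (b gchoose n) * bern_poly n u) (linepath 0 1)"
proof -
  have "((\<lambda>x. M_sum n a b u (1 - x)) has_contour_integral (\<Sum>k\<le>n. (-1) ^ k * (a gchoose k)
      * (b gchoose (n - k)) * (bern_poly (n - k) u * (if k = 0 then 1 else 0)))) (linepath 0 1)"
    (is "(_ has_contour_integral ?I) _")
    by (intro M_sum_has_contour_integral has_contour_integral_lmul bern_poly_reflect_integral)
  also have "?I = bconv n a b (\<lambda>k. if k = 0 then 1 else 0) (\<lambda>j. bern_poly j u)"
    unfolding bconv_def by (simp add: mult_ac)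
  also have "\<dots> = (b gchoose n) * bern_poly n u"
    by (simp add: bconv_delta_left)
  finally show ?thesis .
qed

lemma M_sum_integral_reflect_diag:
  "((\<lambda>x. M_sum n a b (1 - x) x) has_contour_integral
    (\<Sum>k\<le>n. (-1) ^ k * (a gchoose k) * (b gchoose (n - k)) * bern_product_integral (n - k) k))
    (linepath 0 1)"
  by (intro M_sum_has_contour_integral bern_product_has_contour_integral)

lemma bern_product_integral_sum:
  assumes "n > 0"
  shows "(\<Sum>k\<le>n. (-1) ^ k * (r gchoose k) * (s gchoose (n - k)) * bern_product_integral (n - k) k)
    = - bern n / fact n
      * ((\<Sum>k\<le>n. (-1) ^ k * ffact r k * ffact s (n - k)) - ffact s n - (-1) ^ n * ffact r n)"
proof -
  define X where "X k = (-1) ^ k * ffact r k * ffact s (n - k)" for k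
  define c where "c = - bern n / fact n"
  have "(\<Sum>k\<le>n. (-1) ^ k * (r gchoose k) * (s gchoose (n - k)) * bern_product_integral (n - k) k)
      = (\<Sum>k\<le>n. c * X k - (if k = 0 then c * X k else 0) - (if k = n then c * X k else 0))"
  proof (rule sum.cong)
    fix k assume "k \<in> {..n}"
    then consider "k = 0" | "k = n" | "0 < k" "k < n" by fastforce
    then show "(-1) ^ k * (r gchoose k) * (s gchoose (n - k)) * bern_product_integral (n - k) k
        = c * X k - (if k = 0 then c * X k else 0) - (if k = n then c * X k else 0)"
    proof cases
      case 3
      then have "n - k + k = n" by simp
      with 3 show ?thesis
        by (simp add: bern_product_integral_def X_def c_def gbinomial_mult_fact_eq_ffact [symmetric])
    qed (use assms in \<open>simp_all add: bern_product_integral_def\<close>)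
  qed simp
  also have "\<dots> = c * ((\<Sum>k\<le>n. X k) - X 0 - X n)"
    by (simp add: sum_subtractf sum_distrib_left right_diff_distrib)
  finally show ?thesis
    by (simp add: X_def c_def)
qed

lemma bern_cyclic_integral_eq_0:
  assumes "n > 0" and rst: "r + s + t = of_nat n"
  shows "r * ((-1) ^ n * (s gchoose n) * bern n) + s * ((r gchoose n) * bern n)
    + t * (\<Sum>k\<le>n. (-1) ^ k * (r gchoose k) * (s gchoose (n - k)) * bern_product_integral (n - k) k) = 0"
proof -
  define W where "W = (\<Sum>k\<le>n. (-1) ^ k * ffact r k * ffact s (n - k))"
  define \<sigma> where "\<sigma> = ((-1) ^ n :: complex)"
  have binomials: "s gchoose n = ffact s n / fact n" "r gchoose n = ffact r n / fact n"
    using gbinomial_mult_fact_eq_ffact [of s n] gbinomial_mult_fact_eq_ffact [of r n]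
    by (simp_all add: field_simps)
  have t: "t = of_nat n - r - s"
    using rst by (simp add: algebra_simps)
  have tW: "t * W = (r + t) * ffact s n + \<sigma> * (s + t) * ffact r n"
    using ffact_alternating_convolution [of r s n] unfolding t
    by (simp add: W_def \<sigma>_def ffact_Suc algebra_simps)
  have "r * ((-1) ^ n * (s gchoose n) * bern n) + s * ((r gchoose n) * bern n)
      + t * (\<Sum>k\<le>n. (-1) ^ k * (r gchoose k) * (s gchoose (n - k)) * bern_product_integral (n - k) k)
      = bern n / fact n
        * (\<sigma> * r * ffact s n + s * ffact r n - (t * W - t * ffact s n - t * \<sigma> * ffact r n))"
    unfolding bern_product_integral_sum [OF \<open>n > 0\<close>] binomials W_def [symmetric] \<sigma>_def [symmetric]
    by (simp add: algebra_simps)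
  also have "\<dots> = bern n / fact n * (\<sigma> - 1) * (r * ffact s n - s * ffact r n)"
    unfolding tW by (simp add: field_simps)
  also have "\<dots> = 0"
  proof (cases "even n")
    case False
    then have "n = 1 \<or> bern n = 0" by (auto intro: bern_odd)
    then show ?thesis by (auto simp: ffact_def)
  qed (simp add: \<sigma>_def)
  finally show ?thesis .
qed

lemma bern_cyclic_sum_eq_0:
  assumes "r + s + t = of_nat n"
  shows "bern_cyclic_sum n r s t x y = 0"
proof (rule vanishing_by_derivative_induction [where F = bern_cyclic_sum,
      OF bern_cyclic_sum_has_field_derivative _ _ assms])
  fix r s t :: complex
  assume "r + s + t = 0"
  then show "bern_cyclic_sum 0 r s t x y = 0" for x y
    by (simp add: bern_cyclic_sum_def M_sum_def algebra_simps)
next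
  fix m and r s t :: complex
  assume rst: "r + s + t = of_nat (Suc m)"
    and const: "\<And>x y. bern_cyclic_sum (Suc m) r s t x y = bern_cyclic_sum (Suc m) r s t 0 0"
  let ?n = "Suc m"
  have "((\<lambda>x. bern_cyclic_sum ?n r s t x 0) has_contour_integral
      r * ((-1) ^ ?n * (s gchoose ?n) * bern_poly ?n 0) + s * ((r gchoose ?n) * bern_poly ?n 0)
      + t * (\<Sum>k\<le>?n. (-1) ^ k * (r gchoose k) * (s gchoose (?n - k)) * bern_product_integral (?n - k) k))
      (linepath 0 1)"
    unfolding bern_cyclic_sum_def diff_zero
    by (intro has_contour_integral_add has_contour_integral_lmul M_sum_integral_fst
        M_sum_integral_snd_reflect M_sum_integral_reflect_diag)
  moreover have "(\<lambda>x. bern_cyclic_sum ?n r s t x 0) = (\<lambda>_. bern_cyclic_sum ?n r s t 0 0)"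
    using const by blast
  ultimately have "((\<lambda>_. bern_cyclic_sum ?n r s t 0 0) has_contour_integral 0) (linepath 0 1)"
    unfolding bern_poly_at_0 bern_cyclic_integral_eq_0 [OF zero_less_Suc rst] by (simp only:)
  then show "bern_cyclic_sum ?n r s t 0 0 = 0"
    by (rule has_contour_integral_unit_segment_const_eq)
qed

section \<open>The mixed Bernoulli--Euler identity\<close>

definition bern_eul_defect :: "nat \<Rightarrow> complex \<Rightarrow> complex \<Rightarrow> complex \<Rightarrow> complex \<Rightarrow> complex \<Rightarrow> complex" where
  "bern_eul_defect n r s t x y =
     bconv n r s (\<lambda>k. bern_poly k x) (\<lambda>j. eul_poly j (1 - x - y))
     - (-1) ^ n * bconv n r t (\<lambda>k. bern_poly k y) (\<lambda>j. eul_poly j (1 - x - y))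
     - r / 2 * bconv (n - 1) s t (\<lambda>k. eul_poly k y) (\<lambda>j. eul_poly j x)"

lemma bern_eul_defect_has_field_derivative:
  assumes rst: "r + s + t = of_nat (Suc m)"
    and u: "(u has_field_derivative u') (at w)" and v: "(v has_field_derivative v') (at w)"
  shows "((\<lambda>w. bern_eul_defect (Suc (Suc m)) r s t (u w) (v w)) has_field_derivative
    u' * t * bern_eul_defect (Suc m) r s (t - 1) (u w) (v w)
    - v' * s * bern_eul_defect (Suc m) r (s - 1) t (u w) (v w)) (at w)"
proof -
  define z where "z w = 1 - u w - v w" for w
  have z: "(z has_field_derivative - u' - v') (at w)"
    unfolding z_def by (rule DERIV_cong [OF DERIV_diff [OF DERIV_diff [OF DERIV_const u] v]]) simp
  let ?B = "\<lambda>x k. bern_poly k x" and ?E = "\<lambda>x k. eul_poly k x"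
  let ?x = "u w" and ?y = "v w" and ?z = "z w"
  note BE = bconv_has_field_derivative [OF bern_poly_has_field_derivative eul_poly_has_field_derivative]
  note EE = bconv_has_field_derivative [OF eul_poly_has_field_derivative eul_poly_has_field_derivative]
  have "((\<lambda>w. bern_eul_defect (Suc (Suc m)) r s t (u w) (v w)) has_field_derivative
      (s * (- u' - v') * bconv (Suc m) r (s - 1) (?B ?x) (?E ?z)
        - r * u' * bconv (Suc m) (r - 1) s (?B ?x) (?E ?z))
    - (-1) ^ Suc (Suc m) * (t * (- u' - v') * bconv (Suc m) r (t - 1) (?B ?y) (?E ?z)
        - r * v' * bconv (Suc m) (r - 1) t (?B ?y) (?E ?z))
    - r / 2 * (t * u' * bconv m s (t - 1) (?E ?y) (?E ?x)
        - s * v' * bconv m (s - 1) t (?E ?y) (?E ?x))) (at w)"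
    (is "(_ has_field_derivative ?D) _")
    unfolding bern_eul_defect_def z_def [symmetric] diff_Suc_1
    by (intro DERIV_diff DERIV_cmult BE EE u v z)
  also have "?D = u' * (- (r * bconv (Suc m) (r - 1) s (?B ?x) (?E ?z)
          + s * bconv (Suc m) r (s - 1) (?B ?x) (?E ?z))
        + (-1) ^ m * t * bconv (Suc m) r (t - 1) (?B ?y) (?E ?z)
        - r / 2 * t * bconv m s (t - 1) (?E ?y) (?E ?x))
    - v' * (s * bconv (Suc m) r (s - 1) (?B ?x) (?E ?z)
        - (-1) ^ m * (r * bconv (Suc m) (r - 1) t (?B ?y) (?E ?z)
          + t * bconv (Suc m) r (t - 1) (?B ?y) (?E ?z))
        - r / 2 * s * bconv m (s - 1) t (?E ?y) (?E ?x))"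
    by (simp add: algebra_simps)
  also have "\<dots> = u' * t * bern_eul_defect (Suc m) r s (t - 1) ?x ?y
      - v' * s * bern_eul_defect (Suc m) r (s - 1) t ?x ?y"
  proof -
    have rs: "r + s - of_nat (Suc m) = - t" and rt: "r + t - of_nat (Suc m) = - s"
      using rst by (simp_all add: algebra_simps)
    show ?thesis
      unfolding bconv_absorb rs rt bern_eul_defect_def z_def by (simp add: algebra_simps)
  qed
  finally show ?thesis .
qed

lemma bern_eul_defect_Suc_0:
  assumes "r + s + t = 0"
  shows "bern_eul_defect (Suc 0) r s t x y = 0"
proof -
  have t: "t = - r - s"
    using assms by (simp add: eq_neg_iff_add_eq_0 algebra_simps)
  have B1: "bern_poly (Suc 0) x = x - 1 / 2" and E1: "eul_poly (Suc 0) x = x - 1 / 2" for x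
    using bern_poly_1 eul_poly_1 by simp_all
  show ?thesis
    by (simp add: bern_eul_defect_def bconv_def B1 E1 t algebra_simps)
qed

lemma bern_eul_defect_eq_0_if_const:
  assumes "\<And>x y. bern_eul_defect (Suc (Suc m)) r s t x y = bern_eul_defect (Suc (Suc m)) r s t 0 0"
  shows "bern_eul_defect (Suc (Suc m)) r s t 0 0 = 0"
proof -
  define N where "N = Suc (Suc m)"
  define \<sigma> where "\<sigma> = ((-1) ^ N :: complex)"
  let ?B = "\<lambda>x k. bern_poly k x" and ?E = "\<lambda>x k. eul_poly k x"
  have E: "(\<lambda>j. eul_poly j 1 + eul_poly j 0) = (\<lambda>j. if j = 0 then 2 else 0)"
    by (simp add: fun_eq_iff eul_poly_at_1_add_at_0)
  have B: "(\<lambda>k. bern_poly k 1) = (\<lambda>k. bern_poly k 0 + (if k = 1 then 1 else 0))"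
    by (simp add: fun_eq_iff bern_poly_at_0 bern_poly_at_1)
  have "2 * bern_eul_defect N r s t 0 0 = bern_eul_defect N r s t 0 0 + bern_eul_defect N r s t 0 1"
    using assms [of 0 1] by (simp add: N_def)
  also have "\<dots> = bconv N r s (?B 0) (\<lambda>j. eul_poly j 1 + eul_poly j 0)
      - \<sigma> * (bconv N r t (?B 0) (\<lambda>j. eul_poly j 1 + eul_poly j 0)
        + bconv N r t (\<lambda>k. if k = 1 then 1 else 0) (?E 0))
      - r / 2 * bconv (N - 1) s t (\<lambda>j. eul_poly j 1 + eul_poly j 0) (?E 0)"
    by (simp add: bern_eul_defect_def B bconv_add_left bconv_add_right \<sigma>_def algebra_simps)
  also have "\<dots> = (\<sigma> - 1) * (2 * (r gchoose N) * bern N + r * (t gchoose (N - 1)) * eul_poly (N - 1) 0)"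
    unfolding E
    by (simp add: bconv_delta_left bconv_delta_right bern_poly_at_0 N_def \<sigma>_def algebra_simps)
  also have "\<dots> = 0"
  proof (cases "even N")
    case False
    then have "bern N = 0" and "eul_poly (N - 1) 0 = 0"
      by (auto simp: N_def intro!: bern_odd eul_poly_at_0_even)
    then show ?thesis by simp
  qed (simp add: \<sigma>_def)
  finally show ?thesis by (simp add: N_def)
qed

lemma bern_eul_defect_eq_0:
  assumes "r + s + t = of_nat n"
  shows "bern_eul_defect (Suc n) r s t x y = 0"
proof (rule vanishing_by_derivative_induction [where F = "\<lambda>n. bern_eul_defect (Suc n)",
      OF bern_eul_defect_has_field_derivative _ _ assms])
  show "bern_eul_defect (Suc 0) r s t x y = 0" if "r + s + t = 0" for r s t x y
    using that by (rule bern_eul_defect_Suc_0)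
  show "bern_eul_defect (Suc (Suc m)) r s t 0 0 = 0"
    if "\<And>x y. bern_eul_defect (Suc (Suc m)) r s t x y = bern_eul_defect (Suc (Suc m)) r s t 0 0"
    for m r s t
    using that by (rule bern_eul_defect_eq_0_if_const)
qed

theorem theorem1p1:
  fixes n :: nat and x y z :: complex
  assumes "n > 0" and "x + y + z = 1"
  shows "(\<forall>r s t :: complex. r + s + t = of_nat n - 1 \<longrightarrow>
            (\<Sum>k\<le>n. (-1) ^ k * (r gchoose k) * (s gchoose (n - k)) * bern_poly k x * eul_poly (n - k) z)
            - (-1) ^ n * (\<Sum>k\<le>n. (-1) ^ k * (r gchoose k) * (t gchoose (n - k)) * bern_poly k y * eul_poly (n - k) z)
            = r / 2 * (\<Sum>l\<le>n - 1. (-1) ^ l * (s gchoose l) * (t gchoose (n - 1 - l))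
                                     * eul_poly l y * eul_poly (n - 1 - l) x))
       \<and> (\<forall>r s t :: complex. r + s + t = of_nat n \<longrightarrow>
            r * M_sum n s t x y + s * M_sum n t r y z + t * M_sum n r s z x = 0)"
proof -
  have z: "z = 1 - x - y"
    using assms(2) by (simp add: algebra_simps)
  obtain m where n: "n = Suc m"
    using assms(1) gr0_implies_Suc by blast
  have "bern_eul_defect n r s t x y = 0" if "r + s + t = of_nat n - 1" for r s t
    using bern_eul_defect_eq_0 [of r s t m] that n by simp
  moreover have "bern_cyclic_sum n r s t x y = 0" if "r + s + t = of_nat n" for r s t
    using bern_cyclic_sum_eq_0 [OF that] .
  ultimately show ?thesis
    unfolding bern_eul_defect_def bconv_def bern_cyclic_sum_def z right_minus_eq by blast
qed

end
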